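(* Let $\mathcal{C}$ be a class of $\Sigma$-algebras and assume that $\mathbf{T}_{\le 0}/{\sim_{\mathcal{C}}}$ is finite. Let $S_0 = \{s_1,\dots,s_m\} \subseteq \mathbf{T}_{\le 0}$ be such that $\mathbf{T}_{\le 0}/{\sim_{\mathcal{C}}} = \{[s_1],\dots,[s_m]\}$. Let $\dot\Sigma_0 \subseteq \dot\Sigma$ be the finite set of characters $f(t_1,\dots,t_{i-1},\_,t_{i+1},\dots,t_n)$ with $f\in\Sigma$ $n$-ary, $i\in\{1,\dots,n\}$ and $t_j\in S_0$ for all $j\ne i$. Then, if $\dot\Sigma_0^*/{\dot\sim_{\mathcal{C}}}$ is finite, $\dot\Sigma^*/{\dot\sim_{\mathcal{C}}}$ is finite.
   Context: $\Sigma$ is a finite algebraic signature and $V$ a non-empty finite set of variables; $\mathbf{T}$ is the set of $\Sigma$-terms over $V$. A $\Sigma$-algebra has a non-empty finite universe and an interpretation of each function symbol; $t \sim_{\mathcal{C}} s$ iff $t$ and $s$ evaluate equally under all valuations in all algebras in $\mathcal{C}$. $\mathrm{vo}(t)$ is the number of variable occurrences in $t$, and $\mathbf{T}_{\le k}=\{t\in\mathbf{T} : \mathrm{vo}(t)\le k\}$. $\dot\Sigma$ is the set of characters $f(t_1,\dots,t_{i-1},\_,t_{i+1},\dots,t_n)$ where $f\in\Sigma$ is $n$-ary, $i\in\{1,\dots,n\}$, and each $t_j$ ($j\ne i$) has $\mathrm{vo}(t_j)=0$. For $w\in\dot\Sigma^*$, $w[t]$ is defined by $\varepsilon[t]=t$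 and $(f(t_1,\dots,\_,\dots,t_n)\,w')[t] = f(t_1,\dots,t_{i-1},w'[t],t_{i+1},\dots,t_n)$. $w\ \dot\sim_{\mathcal{C}}\ w'$ iff $w[a]\sim_{\mathcal{C}} w'[a]$ for any variable $a\in V$ (the relation is considered on $\dot\Sigma^*$ and on its restriction to $\dot\Sigma_0^*$). *)

theory Defs
  imports Main
begin

datatype ('f, 'v) trm = Var 'v | Fun 'f "('f, 'v) trm list"

inductive_set terms :: "'f set \<Rightarrow> ('f \<Rightarrow> nat) \<Rightarrow> 'v set \<Rightarrow> ('f, 'v) trm set"
  for Sig ar V where
  var: "x \<in> V \<Longrightarrow> Var x \<in> terms Sig ar V"
| fn: "f \<in> Sig \<Longrightarrow> length ts = ar f \<Longrightarrow> (\<forall>t\<in>set ts. t \<in> terms Sig ar V)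
        \<Longrightarrow> Fun f ts \<in> terms Sig ar V"

fun vo :: "('f, 'v) trm \<Rightarrow> nat" where
  "vo (Var x) = 1"
| "vo (Fun f ts) = sum_list (map vo ts)"

definition terms_le :: "'f set \<Rightarrow> ('f \<Rightarrow> nat) \<Rightarrow> 'v set \<Rightarrow> nat \<Rightarrow> ('f, 'v) trm set" where
  "terms_le Sig ar V k = {t \<in> terms Sig ar V. vo t \<le> k}"

type_synonym ('f, 'u) alg = "'u set \<times> ('f \<Rightarrow> 'u list \<Rightarrow> 'u)"

definition is_algebra :: "'f set \<Rightarrow> ('f \<Rightarrow> nat) \<Rightarrow> ('f, 'u) alg \<Rightarrow> bool" where
  "is_algebra Sig ar A \<longleftrightarrow> fst A \<noteq> {} \<and> finite (fst A) \<and>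
     (\<forall>f\<in>Sig. \<forall>xs. length xs = ar f \<and> set xs \<subseteq> fst A \<longrightarrow> snd A f xs \<in> fst A)"

fun eval :: "('f \<Rightarrow> 'u list \<Rightarrow> 'u) \<Rightarrow> ('v \<Rightarrow> 'u) \<Rightarrow> ('f, 'v) trm \<Rightarrow> 'u" where
  "eval I \<alpha> (Var x) = \<alpha> x"
| "eval I \<alpha> (Fun f ts) = I f (map (eval I \<alpha>) ts)"

definition equiv_C :: "('f, 'u) alg set \<Rightarrow> 'v set \<Rightarrow> ('f, 'v) trm \<Rightarrow> ('f, 'v) trm \<Rightarrow> bool" where
  "equiv_C C V t s \<longleftrightarrow>
     (\<forall>A\<in>C. \<forall>\<alpha>. (\<forall>x\<in>V. \<alpha> x \<in> fst A) \<longrightarrow> eval (snd A) \<alpha> t = eval (snd A) \<alpha> s)"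

text \<open>A character f(t_1,..,t_{i-1},_,t_{i+1},..,t_n) is represented as
  (f, [t_1,..,t_{i-1}], [t_{i+1},..,t_n]).\<close>
type_synonym ('f, 'v) chr = "'f \<times> ('f, 'v) trm list \<times> ('f, 'v) trm list"

definition chars_over :: "'f set \<Rightarrow> ('f \<Rightarrow> nat) \<Rightarrow> ('f, 'v) trm set \<Rightarrow> ('f, 'v) chr set" where
  "chars_over Sig ar S = {(f, l, r). f \<in> Sig \<and> length l + 1 + length r = ar f \<and>
      set l \<subseteq> S \<and> set r \<subseteq> S}"

text \<open>dot-Sigma: side arguments are ground terms (vo = 0).\<close>
definition chars :: "'f set \<Rightarrow> ('f \<Rightarrow> nat) \<Rightarrow> 'v set \<Rightarrow> ('f, 'v) chr set" where
  "chars Sig ar V = chars_over Sig ar (terms_le Sig ar V 0)"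

fun plug :: "('f, 'v) chr list \<Rightarrow> ('f, 'v) trm \<Rightarrow> ('f, 'v) trm" where
  "plug [] t = t"
| "plug ((f, l, r) # w) t = Fun f (l @ [plug w t] @ r)"

definition dot_equiv_C :: "('f, 'u) alg set \<Rightarrow> 'v set \<Rightarrow> ('f, 'v) chr list \<Rightarrow> ('f, 'v) chr list \<Rightarrow> bool" where
  "dot_equiv_C C V w w' \<longleftrightarrow> (\<forall>a\<in>V. equiv_C C V (plug w (Var a)) (plug w' (Var a)))"

definition rel_on :: "'a set \<Rightarrow> ('a \<Rightarrow> 'a \<Rightarrow> bool) \<Rightarrow> ('a \<times> 'a) set" where
  "rel_on X R = {(x, y). x \<in> X \<and> y \<in> X \<and> R x y}"

end

theory Submission
  imports Defs
begin

text \<open>Replacing every ground side argument of a word by a \<open>\<sim>\<^sub>C\<close>-equivalent term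
  preserves the class of the word, since \<open>\<sim>\<^sub>C\<close> is a congruence. Choosing the
  replacements in \<open>S\<^sub>0\<close> shows that every class of words over all characters contains a
  word over the restricted characters, so there are at most as many classes as for the
  restricted alphabet.\<close>

lemma finite_quotient_rel_on_if_covered:
  assumes refl: "\<And>x. R x x"
    and sym: "\<And>x y. R x y \<Longrightarrow> R y x"
    and trans: "\<And>x y z. R x y \<Longrightarrow> R y z \<Longrightarrow> R x z"
    and "Y \<subseteq> X"
    and covered: "\<And>x. x \<in> X \<Longrightarrow> \<exists>y\<in>Y. R x y"
    and "finite (Y // rel_on Y R)"
  shows "finite (X // rel_on X R)"
proof -
  have "X // rel_on X R \<subseteq> (\<lambda>c. rel_on X R `` c) ` (Y // rel_on Y R)"
  proof
    fix c assume "c \<in> X // rel_on X R"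
    then obtain x where x: "x \<in> X" and c: "c = rel_on X R `` {x}"
      by (auto elim: quotientE)
    obtain y where y: "y \<in> Y" "R x y" using covered[OF x] by blast
    have "rel_on X R `` (rel_on Y R `` {y}) = c"
    proof (intro equalityI subsetI)
      fix z assume "z \<in> rel_on X R `` (rel_on Y R `` {y})"
      then obtain y' where "R y y'" "R y' z" "z \<in> X" by (auto simp: rel_on_def)
      then have "R x z" using y(2) by (blast intro: trans)
      then show "z \<in> c" using x \<open>z \<in> X\<close> by (simp add: c rel_on_def)
    next
      fix z assume "z \<in> c"
      then have z: "z \<in> X" "R x z" by (simp_all add: c rel_on_def)
      have "R y z" using sym[OF y(2)] z(2) by (rule trans)
      moreover have "y \<in> rel_on Y R `` {y}" using y(1) refl by (simp add: rel_on_def)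
      ultimately show "z \<in> rel_on X R `` (rel_on Y R `` {y})"
        using y(1) z(1) \<open>Y \<subseteq> X\<close> by (auto simp: rel_on_def)
    qed
    moreover have "rel_on Y R `` {y} \<in> Y // rel_on Y R"
      using y(1) by (rule quotientI)
    ultimately show "c \<in> (\<lambda>c. rel_on X R `` c) ` (Y // rel_on Y R)" by blast
  qed
  then show ?thesis by (rule finite_surj[OF assms(6)])
qed

lemma quotient_image_representative:
  assumes "X // rel_on X R = (\<lambda>s. rel_on X R `` {s}) ` S"
    and "\<And>x. R x x" and "x \<in> X"
  shows "\<exists>s\<in>S. R s x"
proof -
  have "rel_on X R `` {x} \<in> (\<lambda>s. rel_on X R `` {s}) ` S"
    using quotientI[OF \<open>x \<in> X\<close>, of "rel_on X R"] unfolding assms(1) .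
  then obtain s where "s \<in> S" "rel_on X R `` {x} = rel_on X R `` {s}" by blast
  moreover have "x \<in> rel_on X R `` {x}" using assms(2,3) by (simp add: rel_on_def)
  ultimately have "s \<in> S" "(s, x) \<in> rel_on X R" by auto
  then show ?thesis by (auto simp: rel_on_def)
qed

lemma equiv_C_refl: "equiv_C C V t t"
  by (simp add: equiv_C_def)

lemma equiv_C_sym: "equiv_C C V t s \<Longrightarrow> equiv_C C V s t"
  by (simp add: equiv_C_def)

lemma equiv_C_Fun_cong:
  assumes "list_all2 (equiv_C C V) ts ss"
  shows "equiv_C C V (Fun f ts) (Fun f ss)"
  unfolding equiv_C_def
proof (intro ballI allI impI)
  fix A \<alpha>
  assume A: "A \<in> C" and \<alpha>: "\<forall>x\<in>V. \<alpha> x \<in> fst A"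
  have "list_all2 (\<lambda>t s. eval (snd A) \<alpha> t = eval (snd A) \<alpha> s) ts ss"
    using assms by (rule list_all2_mono) (use A \<alpha> in \<open>simp add: equiv_C_def\<close>)
  then have "map (eval (snd A) \<alpha>) ts = map (eval (snd A) \<alpha>) ss"
    by (subst list_all2_eq) (simp add: list_all2_map1 list_all2_map2)
  then show "eval (snd A) \<alpha> (Fun f ts) = eval (snd A) \<alpha> (Fun f ss)" by simp
qed

lemma dot_equiv_C_refl: "dot_equiv_C C V w w"
  by (simp add: dot_equiv_C_def equiv_C_def)

lemma dot_equiv_C_sym: "dot_equiv_C C V w w' \<Longrightarrow> dot_equiv_C C V w' w"
  by (simp add: dot_equiv_C_def equiv_C_def)

lemma dot_equiv_C_trans:
  "dot_equiv_C C V w w' \<Longrightarrow> dot_equiv_C C V w' w'' \<Longrightarrow> dot_equiv_C C V w w''"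
  by (simp add: dot_equiv_C_def equiv_C_def)

lemma chars_over_mono: "S \<subseteq> T \<Longrightarrow> chars_over Sig ar S \<subseteq> chars_over Sig ar T"
  by (auto simp: chars_over_def)

definition map_sides :: "(('f, 'v) trm \<Rightarrow> ('f, 'v) trm) \<Rightarrow> ('f, 'v) chr list \<Rightarrow> ('f, 'v) chr list" where
  "map_sides g = map (\<lambda>(f, l, r). (f, map g l, map g r))"

lemma map_sides_in_lists_chars_over:
  assumes "w \<in> lists (chars_over Sig ar T)" and "\<And>t. t \<in> T \<Longrightarrow> g t \<in> S"
  shows "map_sides g w \<in> lists (chars_over Sig ar S)"
  using assms by (force simp: map_sides_def chars_over_def)

lemma list_all2_equiv_C_map:
  "(\<And>t. t \<in> set ts \<Longrightarrow> equiv_C C V t (g t)) \<Longrightarrow> list_all2 (equiv_C C V) ts (map g ts)"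
  by (simp add: list_all2_conv_all_nth)

lemma equiv_C_plug_map_sides:
  assumes "\<And>f l r t. (f, l, r) \<in> set w \<Longrightarrow> t \<in> set l \<union> set r \<Longrightarrow> equiv_C C V t (g t)"
  shows "equiv_C C V (plug w u) (plug (map_sides g w) u)"
  using assms
proof (induction w)
  case Nil
  show ?case by (simp add: map_sides_def equiv_C_refl)
next
  case (Cons c w)
  obtain f l r where c: "c = (f, l, r)" by (cases c)
  have "list_all2 (equiv_C C V) l (map g l)" "list_all2 (equiv_C C V) r (map g r)"
    using Cons.prems[of f l r] c by (simp_all add: list_all2_equiv_C_map)
  moreover have "equiv_C C V (plug w u) (plug (map_sides g w) u)"
    using Cons.prems by (intro Cons.IH) auto
  ultimately have "list_all2 (equiv_C C V) (l @ [plug w u] @ r) (map g l @ [plug (map_sides g w) u] @ map g r)"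
    by (intro list_all2_appendI) auto
  then show ?case
    using c by (simp add: map_sides_def equiv_C_Fun_cong)
qed

lemma dot_equiv_C_map_sides:
  assumes "\<And>f l r t. (f, l, r) \<in> set w \<Longrightarrow> t \<in> set l \<union> set r \<Longrightarrow> equiv_C C V t (g t)"
  shows "dot_equiv_C C V w (map_sides g w)"
  using equiv_C_plug_map_sides[OF assms] by (simp add: dot_equiv_C_def)

theorem lemma2p12:
  fixes Sig :: "'f set" and ar :: "'f \<Rightarrow> nat" and V :: "'v set"
    and C :: "('f, 'u) alg set" and S0 :: "('f, 'v) trm set"
  assumes "finite Sig"
    and "finite V" and "V \<noteq> {}"
    and "\<forall>A\<in>C. is_algebra Sig ar A"
    and "finite (terms_le Sig ar V 0 // rel_on (terms_le Sig ar V 0) (equiv_C C V))"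
    and "finite S0" and "S0 \<subseteq> terms_le Sig ar V 0"
    and "terms_le Sig ar V 0 // rel_on (terms_le Sig ar V 0) (equiv_C C V)
         = (\<lambda>s. rel_on (terms_le Sig ar V 0) (equiv_C C V) `` {s}) ` S0"
    and "finite (lists (chars_over Sig ar S0) // rel_on (lists (chars_over Sig ar S0)) (dot_equiv_C C V))"
  shows "finite (lists (chars Sig ar V) // rel_on (lists (chars Sig ar V)) (dot_equiv_C C V))"
proof (rule finite_quotient_rel_on_if_covered[OF dot_equiv_C_refl dot_equiv_C_sym dot_equiv_C_trans])
  let ?T = "terms_le Sig ar V 0"
  have "\<forall>t\<in>?T. \<exists>s. s \<in> S0 \<and> equiv_C C V t s"
    using quotient_image_representative[OF assms(8) equiv_C_refl] equiv_C_sym by blast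
  from bchoice[OF this] obtain g where g: "\<forall>t\<in>?T. g t \<in> S0 \<and> equiv_C C V t (g t)" ..
  show "lists (chars_over Sig ar S0) \<subseteq> lists (chars Sig ar V)"
    unfolding chars_def using assms(7) by (intro lists_mono chars_over_mono)
  show "\<exists>w'\<in>lists (chars_over Sig ar S0). dot_equiv_C C V w w'"
    if w: "w \<in> lists (chars Sig ar V)" for w
  proof
    show "map_sides g w \<in> lists (chars_over Sig ar S0)"
      using g by (intro map_sides_in_lists_chars_over[OF w[unfolded chars_def]]) blast
    show "dot_equiv_C C V w (map_sides g w)"
    proof (rule dot_equiv_C_map_sides)
      fix f l r t assume "(f, l, r) \<in> set w" "t \<in> set l \<union> set r"
      with w have "t \<in> ?T" by (auto simp: chars_def chars_over_def)
      with g show "equiv_C C V t (g t)" by blast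
    qed
  qed
  show "finite (lists (chars_over Sig ar S0) // rel_on (lists (chars_over Sig ar S0)) (dot_equiv_C C V))"
    by (fact assms(9))
qed

end
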